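(* Let $I$ be a nonempty set, $1<p<\infty$, and for each $i\in I$ let $A_i:X_i\to Y_i$ be a bounded linear operator with $\sup_{i\in I}\|A_i\|<\infty$. Let $A:(\bigoplus_{i\in I}X_i)_{\ell_p(I)}\to(\bigoplus_{i\in I}Y_i)_{\ell_p(I)}$ be defined by $A|_{X_i}=A_i$. Then $\mathbf t_p(A)\le\sup_{i\in I}\max\{\mathbf t_p(A_i),\|A_i\|\}$. The analogous statement holds for $\mathbf t_\infty$ with the $\ell_p(I)$-direct sums replaced by $c_0(I)$-direct sums.
   Context: For an operator $B:X\to Y$ and $1<p<\infty$, $\mathbf t_p(B)$ is the infimum of those $C>0$ such that for every $y\in Y$, $\sigma>0$ and weakly null net $(x_\lambda)\subset\sigma B_X$, $\limsup_\lambda\|y+Bx_\lambda\|^p\le\|y\|^p+C^p\sigma^p$; $\mathbf t_\infty(B)$ is the infimum of those $C>0$ such that under the same quantifiers $\limsup_\lambda\|y+Bx_\lambda\|\le\max\{\|y\|,C\sigma\}$ (infimum of empty set $=\infty$). *)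

theory Defs
  imports "HOL-Analysis.Analysis" "HOL-Library.Function_Algebras"
begin

instantiation "fun" :: (type, real_vector) real_vector
begin
definition scaleR_fun :: "real \<Rightarrow> ('a \<Rightarrow> 'b) \<Rightarrow> 'a \<Rightarrow> 'b" where
  "scaleR_fun r f = (\<lambda>x. r *\<^sub>R f x)"
instance
  by standard (auto simp: scaleR_fun_def fun_eq_iff scaleR_add_right scaleR_add_left)
end

definition bounded_linear_on ::
  "'a::real_vector set \<Rightarrow> ('a \<Rightarrow> real) \<Rightarrow> 'b::real_vector set \<Rightarrow> ('b \<Rightarrow> real) \<Rightarrow> ('a \<Rightarrow> 'b) \<Rightarrow> bool" where
  "bounded_linear_on S NS T NT B \<longleftrightarrow>
     (\<forall>x\<in>S. B x \<in> T) \<and>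
     (\<forall>x\<in>S. \<forall>y\<in>S. B (x + y) = B x + B y) \<and>
     (\<forall>c. \<forall>x\<in>S. B (c *\<^sub>R x) = c *\<^sub>R B x) \<and>
     (\<exists>K. \<forall>x\<in>S. NT (B x) \<le> K * NS x)"

definition opnorm_on :: "'a set \<Rightarrow> ('a \<Rightarrow> real) \<Rightarrow> ('b \<Rightarrow> real) \<Rightarrow> ('a \<Rightarrow> 'b) \<Rightarrow> real" where
  "opnorm_on S NS NT B = Sup ((\<lambda>x. NT (B x)) ` {x\<in>S. NS x \<le> 1})"

text \<open>A net, given as a function on an index type together with a filter describing
  "eventually along the net", is weakly null in (S, NS) if every bounded linear
  functional on (S, NS) tends to 0 along it.\<close>
definition weakly_null ::
  "'a::real_vector set \<Rightarrow> ('a \<Rightarrow> real) \<Rightarrow> 'l filter \<Rightarrow> ('l \<Rightarrow> 'a) \<Rightarrow> bool" where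
  "weakly_null S NS F x \<longleftrightarrow>
     (\<forall>f. bounded_linear_on S NS (UNIV::real set) abs f \<longrightarrow> ((\<lambda>l. f (x l)) \<longlongrightarrow> 0) F)"

text \<open>Nets are represented by a filter on an
  index set (here the index type is the type of the space itself, which suffices:
  every net can be pushed forward to one indexed in this way with the same limit
  behaviour). The infimum of the empty set is infinity.\<close>
definition tp ::
  "real \<Rightarrow> 'a::real_vector set \<Rightarrow> ('a \<Rightarrow> real) \<Rightarrow> 'b::real_vector set \<Rightarrow> ('b \<Rightarrow> real) \<Rightarrow> ('a \<Rightarrow> 'b) \<Rightarrow> ereal" where
  "tp p S NS T NT B = Inf (ereal ` {C. C > 0 \<and>
     (\<forall>y\<in>T. \<forall>\<sigma>>0. \<forall>(F::'a filter) (x::'a \<Rightarrow> 'a).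
        (\<forall>l. x l \<in> S \<and> NS (x l) \<le> \<sigma>) \<and> weakly_null S NS F x \<longrightarrow>
        Limsup F (\<lambda>l. ereal (NT (y + B (x l)) powr p)) \<le> ereal (NT y powr p + C powr p * \<sigma> powr p))})"

definition tinf ::
  "'a::real_vector set \<Rightarrow> ('a \<Rightarrow> real) \<Rightarrow> 'b::real_vector set \<Rightarrow> ('b \<Rightarrow> real) \<Rightarrow> ('a \<Rightarrow> 'b) \<Rightarrow> ereal" where
  "tinf S NS T NT B = Inf (ereal ` {C. C > 0 \<and>
     (\<forall>y\<in>T. \<forall>\<sigma>>0. \<forall>(F::'a filter) (x::'a \<Rightarrow> 'a).
        (\<forall>l. x l \<in> S \<and> NS (x l) \<le> \<sigma>) \<and> weakly_null S NS F x \<longrightarrow>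
        Limsup F (\<lambda>l. ereal (NT (y + B (x l)))) \<le> ereal (max (NT y) (C * \<sigma>)))})"

text \<open>The spaces X i (i in I) are closed linear subspaces of a common Banach space;
  elements of the direct sum are functions vanishing outside I.\<close>
definition lp_sum :: "real \<Rightarrow> 'i set \<Rightarrow> ('i \<Rightarrow> 'x::real_normed_vector set) \<Rightarrow> ('i \<Rightarrow> 'x) set" where
  "lp_sum p I X = {x. (\<forall>i. i \<notin> I \<longrightarrow> x i = 0) \<and> (\<forall>i\<in>I. x i \<in> X i) \<and>
                      (\<lambda>i. norm (x i) powr p) summable_on I}"

definition lp_norm :: "real \<Rightarrow> 'i set \<Rightarrow> ('i \<Rightarrow> 'x::real_normed_vector) \<Rightarrow> real" where
  "lp_norm p I x = (\<Sum>\<^sub>\<infinity>i\<in>I. norm (x i) powr p) powr (1 / p)"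

definition c0_sum :: "'i set \<Rightarrow> ('i \<Rightarrow> 'x::real_normed_vector set) \<Rightarrow> ('i \<Rightarrow> 'x) set" where
  "c0_sum I X = {x. (\<forall>i. i \<notin> I \<longrightarrow> x i = 0) \<and> (\<forall>i\<in>I. x i \<in> X i) \<and>
                    (\<forall>\<epsilon>>0. finite {i\<in>I. norm (x i) \<ge> \<epsilon>})}"

definition sup_norm :: "'i set \<Rightarrow> ('i \<Rightarrow> 'x::real_normed_vector) \<Rightarrow> real" where
  "sup_norm I x = (SUP i\<in>I. norm (x i))"

definition diag_op :: "'i set \<Rightarrow> ('i \<Rightarrow> 'x \<Rightarrow> 'y::zero) \<Rightarrow> ('i \<Rightarrow> 'x) \<Rightarrow> 'i \<Rightarrow> 'y" where
  "diag_op I A x = (\<lambda>i. if i \<in> I then A i (x i) else 0)"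

end

theory Submission
  imports Defs
begin

text \<open>Fix a real C above every t_p(A_i) and every ||A_i||. The coordinates of a weakly null
  net x in the l_p-sum are weakly null, and the defining estimate of t_p(A_i), which is stated
  for nets in a ball of fixed radius, upgrades to the varying radius ||x(i)|| by sorting the net
  into finitely many bands of that size. Given y, choose a finite set J of coordinates carrying
  all but a small part of ||y||^p: on J the upgraded estimate holds eventually, and off J
  convexity gives ||y_i + A_i x_i||^p <= (1+d)^(p-1) C^p ||x_i||^p + (1+1/d)^(p-1) ||y_i||^p.
  Summing, ||y + A x||^p <= ||y||^p + C^p sigma^p + e eventually, whence t_p(A) <= C.
  For c_0-sums, J consists of the finitely many coordinates where y is not small.\<close>

section \<open>Elementary estimates\<close>

lemma powr_add_le_convex_split:
  fixes a b d p :: real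
  assumes "0 \<le> a" "0 \<le> b" "0 < d" "1 \<le> p"
  shows "(a + b) powr p \<le> (1 + d) powr (p - 1) * b powr p + (1 + 1/d) powr (p - 1) * a powr p"
proof (cases "a = 0 \<or> b = 0")
  case True
  have "1 \<le> (1 + d) powr (p - 1)" "1 \<le> (1 + 1/d) powr (p - 1)"
    using assms by (auto intro!: ge_one_powr_ge_zero)
  with True assms show ?thesis
    by (smt (verit) mult_le_cancel_right1 powr_ge_zero)
next
  case False
  define t where "t = d / (1 + d)"
  have pos: "0 < 1 + d" "0 < 1 + 1/d" "0 < d + d * d"
    using assms(3) by (auto intro: add_pos_pos)
  have t: "0 \<le> t" "t \<le> 1" "(1 - t) * (1 + d) = 1" "t * (1 + 1/d) = 1"
    using assms pos by (auto simp: t_def field_simps)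
  have split_powr: "x powr p = x * x powr (p - 1)" if "0 \<le> x" for x :: real
    using powr_mult_base[OF that, of "p - 1"] by simp
  have "a + b = (1 - t) *\<^sub>R ((1 + d) * b) + t *\<^sub>R ((1 + 1/d) * a)"
    using t(3,4) by (simp add: mult.assoc[symmetric])
  then have "(a + b) powr p \<le> (1 - t) * ((1 + d) * b) powr p + t * ((1 + 1/d) * a) powr p"
    using convex_onD[OF powr_convex[OF assms(4)] t(1,2), of "(1 + d) * b" "(1 + 1/d) * a"] False assms pos
    by simp
  also have "(1 - t) * ((1 + d) * b) powr p = ((1 - t) * (1 + d)) * ((1 + d) powr (p - 1) * b powr p)"
    using pos assms by (simp add: powr_mult split_powr ac_simps)
  also have "t * ((1 + 1/d) * a) powr p = (t * (1 + 1/d)) * ((1 + 1/d) powr (p - 1) * a powr p)"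
    using pos assms by (simp add: powr_mult split_powr ac_simps)
  finally show ?thesis
    by (simp add: t(3,4))
qed

lemma norm_add_powr_le_convex_split:
  fixes u v :: "'a::real_normed_vector"
  assumes "0 < d" "1 \<le> p"
  shows "norm (u + v) powr p \<le> (1 + d) powr (p - 1) * norm v powr p + (1 + 1/d) powr (p - 1) * norm u powr p"
proof -
  have "norm (u + v) powr p \<le> (norm u + norm v) powr p"
    using assms(2) by (intro powr_mono2 norm_triangle_ineq) auto
  also have "\<dots> \<le> (1 + d) powr (p - 1) * norm v powr p + (1 + 1/d) powr (p - 1) * norm u powr p"
    using assms by (intro powr_add_le_convex_split) auto
  finally show ?thesis .
qed

lemma ex_one_plus_powr_less:
  fixes q \<eta> :: real
  assumes "0 < \<eta>"
  shows "\<exists>d>0. (1 + d) powr q < 1 + \<eta>"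
proof -
  have "((\<lambda>d::real. (1 + d) powr q) \<longlongrightarrow> (1 + 0) powr q) (at_right 0)"
    by (intro tendsto_intros) simp
  then have "eventually (\<lambda>d. (1 + d) powr q < 1 + \<eta>) (at_right (0::real))"
    using assms by (intro order_tendstoD) auto
  then obtain b where "0 < b" "\<And>d. 0 < d \<Longrightarrow> d < b \<Longrightarrow> (1 + d) powr q < 1 + \<eta>"
    unfolding eventually_at_right_field by auto
  then show ?thesis
    by (intro exI[of _ "b/2"]) auto
qed

lemma infsum_split_finite:
  fixes f :: "'a \<Rightarrow> real"
  assumes "f summable_on I" "finite J" "J \<subseteq> I"
  shows "infsum f I = sum f J + infsum f (I - J)"
proof -
  have "infsum f (J \<union> (I - J)) = infsum f J + infsum f (I - J)"
    using assms by (intro infsum_Un_disjoint) (auto intro: summable_on_subset_banach)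
  moreover have "J \<union> (I - J) = I"
    using assms by auto
  ultimately show ?thesis
    using assms by (simp add: infsum_finite)
qed

lemma infsum_le_by_finite_split:
  fixes g a b :: "'i \<Rightarrow> real"
  assumes sa: "a summable_on I" and sb: "b summable_on I" and J: "finite J" "J \<subseteq> I"
    and nonneg: "\<And>i. 0 \<le> a i" "\<And>i. 0 \<le> b i" "\<And>i. 0 \<le> g i"
    and head: "\<And>i. i \<in> J \<Longrightarrow> g i \<le> a i + c * b i + \<epsilon>"
    and tail: "\<And>i. i \<in> I - J \<Longrightarrow> g i \<le> q * c * b i + K * a i"
    and coeffs: "1 \<le> q" "0 \<le> c" "0 \<le> \<epsilon>" "0 \<le> K"
  shows "infsum g I \<le> infsum a I + q * c * infsum b I + real (card J) * \<epsilon> + K * infsum a (I - J)"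
proof (cases "g summable_on I")
  case False
  have "0 \<le> infsum a I" "0 \<le> infsum b I" "0 \<le> infsum a (I - J)"
    using nonneg by (auto intro: infsum_nonneg)
  with False coeffs show ?thesis
    by (simp add: infsum_not_exists)
next
  case True
  have sub: "a summable_on (I - J)" "b summable_on (I - J)" "g summable_on (I - J)"
    using sa sb True by (auto intro: summable_on_subset_banach)
  have head_sum: "sum g J \<le> sum a J + q * c * sum b J + real (card J) * \<epsilon>"
  proof -
    have "sum g J \<le> sum a J + c * sum b J + real (card J) * \<epsilon>"
      using sum_mono[of J g "\<lambda>i. a i + c * b i + \<epsilon>"] head
      by (simp add: sum.distrib sum_distrib_left)
    moreover have "c * sum b J \<le> q * c * sum b J"
      using coeffs nonneg mult_right_mono[of 1 q c] by (intro mult_right_mono) (auto intro: sum_nonneg)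
    ultimately show ?thesis
      by linarith
  qed
  have tail_sum: "infsum g (I - J) \<le> q * c * infsum b (I - J) + K * infsum a (I - J)"
    using infsum_mono[OF sub(3), of "\<lambda>i. q * c * b i + K * a i"] tail sub
    by (simp add: infsum_add summable_on_add summable_on_cmult_right infsum_cmult_right')
  have "0 \<le> infsum a (I - J)"
    using nonneg by (auto intro: infsum_nonneg)
  then have "infsum g I \<le> (sum a J + infsum a (I - J)) + q * c * (sum b J + infsum b (I - J))
      + real (card J) * \<epsilon> + K * infsum a (I - J)"
    using infsum_split_finite[OF True J] head_sum tail_sum by (simp add: algebra_simps)
  then show ?thesis
    using infsum_split_finite[OF sa J] infsum_split_finite[OF sb J] by simp
qed

section \<open>Operators between normed carriers\<close>

lemma bounded_linear_on_zero:
  assumes "bounded_linear_on S NS T NT B" "subspace S"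
  shows "B 0 = 0"
  using assms subspace_0[OF assms(2)] unfolding bounded_linear_on_def
  by (metis scale_zero_left)

lemma bdd_above_opnorm_on:
  assumes "bounded_linear_on S norm T norm B"
  shows "bdd_above ((\<lambda>x. norm (B x)) ` {x\<in>S. norm x \<le> 1})"
proof -
  obtain K where K: "\<And>x. x \<in> S \<Longrightarrow> norm (B x) \<le> K * norm x"
    using assms unfolding bounded_linear_on_def by blast
  have "norm (B x) \<le> \<bar>K\<bar>" if "x \<in> S" "norm x \<le> 1" for x
    using K[OF that(1)] that(2) mult_left_le[of "norm x" "\<bar>K\<bar>"]
    by (smt (verit) mult_right_mono norm_ge_zero abs_ge_self)
  then show ?thesis
    by (intro bdd_aboveI2) auto
qed

lemma opnorm_on_nonneg:
  assumes "bounded_linear_on S norm T norm B" "subspace S"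
  shows "0 \<le> opnorm_on S norm norm B"
  unfolding opnorm_on_def
  using cSup_upper[OF _ bdd_above_opnorm_on[OF assms(1)], of 0] subspace_0[OF assms(2)]
    bounded_linear_on_zero[OF assms]
  by force

lemma norm_le_opnorm_on:
  assumes "bounded_linear_on S norm T norm B" "subspace S" "v \<in> S"
  shows "norm (B v) \<le> opnorm_on S norm norm B * norm v"
proof (cases "v = 0")
  case True
  then show ?thesis
    using bounded_linear_on_zero[OF assms(1,2)] by simp
next
  case False
  define w where "w = (1 / norm v) *\<^sub>R v"
  have "w \<in> S" "norm w \<le> 1"
    using assms(2,3) False by (auto simp: w_def subspace_scale)
  then have "norm (B w) \<le> opnorm_on S norm norm B"
    unfolding opnorm_on_def by (intro cSup_upper[OF _ bdd_above_opnorm_on[OF assms(1)]]) auto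
  moreover have "B w = (1 / norm v) *\<^sub>R B v"
    using assms(1,3) unfolding bounded_linear_on_def w_def by blast
  ultimately show ?thesis
    using False by (simp add: divide_le_eq mult.commute)
qed

lemma norm_le_if_opnorm_on_le:
  assumes "bounded_linear_on S norm T norm B" "subspace S" "opnorm_on S norm norm B \<le> C" "v \<in> S"
  shows "norm (B v) \<le> C * norm v"
  using norm_le_opnorm_on[OF assms(1,2,4)] mult_right_mono[OF assms(3) norm_ge_zero[of v]] by linarith

section \<open>Weakly null nets\<close>

lemma weakly_null_coordinate:
  fixes SS :: "('i \<Rightarrow> 'x::real_normed_vector) set"
  assumes coord: "\<And>v. v \<in> SS \<Longrightarrow> v i \<in> X" and bound: "\<And>v. v \<in> SS \<Longrightarrow> norm (v i) \<le> N v"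
    and "weakly_null SS N F x"
  shows "weakly_null X norm F (\<lambda>l. x l i)"
  unfolding weakly_null_def
proof (intro allI impI)
  fix f :: "'x \<Rightarrow> real"
  assume f: "bounded_linear_on X norm UNIV abs f"
  then obtain K where K: "\<And>v. v \<in> X \<Longrightarrow> \<bar>f v\<bar> \<le> K * norm v"
    unfolding bounded_linear_on_def by blast
  have "\<bar>f (v i)\<bar> \<le> max K 0 * N v" if "v \<in> SS" for v
  proof -
    have "\<bar>f (v i)\<bar> \<le> max K 0 * norm (v i)"
      using K[OF coord[OF that]] by (smt (verit) mult_right_mono norm_ge_zero)
    also have "\<dots> \<le> max K 0 * N v"
      using bound[OF that] by (intro mult_left_mono) auto
    finally show ?thesis .
  qed
  then have "bounded_linear_on SS N UNIV abs (\<lambda>v. f (v i))"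
    using f coord unfolding bounded_linear_on_def by (auto simp: scaleR_fun_def)
  then show "((\<lambda>l. f (x l i)) \<longlongrightarrow> 0) F"
    using assms(3) unfolding weakly_null_def by blast
qed

lemma weakly_null_filtermap_cong:
  assumes "weakly_null S NS G z" "G' \<le> G" "eventually (\<lambda>l. w (z l) = z l) G'"
  shows "weakly_null S NS (filtermap z G') w"
  unfolding weakly_null_def filterlim_filtermap
proof (intro allI impI)
  fix f assume "bounded_linear_on S NS UNIV abs f"
  then have "((\<lambda>l. f (z l)) \<longlongrightarrow> 0) G'"
    using assms(1,2) unfolding weakly_null_def by (blast intro: tendsto_mono)
  then show "((\<lambda>l. f (w (z l))) \<longlongrightarrow> 0) G'"
    by (rule iffD1[OF tendsto_cong, rotated]) (use assms(3) in \<open>auto elim: eventually_mono\<close>)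
qed

lemma frequently_in_band:
  fixes u :: "'l \<Rightarrow> real"
  assumes freq: "frequently Q G" and "0 < h" and u: "\<And>l. 0 \<le> u l" "\<And>l. u l \<le> M"
  shows "\<exists>k::nat. frequently (\<lambda>l. Q l \<and> real k * h \<le> u l \<and> u l \<le> (real k + 1) * h) G"
proof (rule ccontr)
  define N where "N = nat \<lceil>M / h\<rceil> + 1"
  have band: "\<exists>k\<in>{..<N}. real k * h \<le> u l \<and> u l \<le> (real k + 1) * h" for l
  proof
    define k where "k = nat \<lfloor>u l / h\<rfloor>"
    have k: "real k = of_int \<lfloor>u l / h\<rfloor>"
      using u(1) \<open>0 < h\<close> by (simp add: k_def)
    have "u l / h \<le> M / h"
      using u(2) \<open>0 < h\<close> by (simp add: divide_right_mono)
    then have "\<lfloor>u l / h\<rfloor> \<le> \<lceil>M / h\<rceil>"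
      by (meson ceiling_mono floor_le_ceiling order_trans)
    then show "k \<in> {..<N}"
      unfolding k_def N_def by simp
    have "real k \<le> u l / h" "u l / h \<le> real k + 1"
      unfolding k by linarith+
    then show "real k * h \<le> u l \<and> u l \<le> (real k + 1) * h"
      using \<open>0 < h\<close> by (simp add: field_simps)
  qed
  assume "\<not> ?thesis"
  then have "eventually (\<lambda>l. \<forall>k\<in>{..<N}. \<not> (Q l \<and> real k * h \<le> u l \<and> u l \<le> (real k + 1) * h)) G"
    by (intro eventually_ball_finite) (auto simp: not_frequently)
  then have "eventually (\<lambda>l. \<not> Q l) G"
    by (rule eventually_mono) (use band in blast)
  with freq show False
    by (simp add: frequently_def)
qed

lemma weakly_null_frequently_le:
  fixes z :: "'l \<Rightarrow> 'x::real_vector" and g \<nu> :: "'x \<Rightarrow> real"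
  assumes limsup_le: "\<And>(H :: 'x filter) w. \<forall>v. w v \<in> S \<and> \<nu> (w v) \<le> s \<Longrightarrow>
      weakly_null S NS H w \<Longrightarrow> Limsup H (\<lambda>v. ereal (g (w v))) \<le> ereal b"
    and "0 \<in> S" "\<nu> 0 \<le> s" and "weakly_null S NS G z"
    and freq: "frequently (\<lambda>l. z l \<in> S \<and> \<nu> (z l) \<le> s \<and> c \<le> g (z l)) G"
  shows "c \<le> b"
proof -
  define E where "E = {l. z l \<in> S \<and> \<nu> (z l) \<le> s \<and> c \<le> g (z l)}"
  define G' where "G' = inf G (principal E)"
  \<comment> \<open>limsup_le needs a net bounded everywhere; replacing z by 0 off the ball changes nothing eventually along G'\<close>
  define w where "w v = (if v \<in> S \<and> \<nu> v \<le> s then v else 0)" for v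
  have "G' \<noteq> bot"
    using freq unfolding G'_def E_def frequently_def trivial_limit_def eventually_inf_principal by simp
  have in_E: "eventually (\<lambda>l. l \<in> E) G'"
    unfolding G'_def eventually_inf_principal by simp
  then have w_z: "eventually (\<lambda>l. w (z l) = z l) G'"
    by (rule eventually_mono) (auto simp: E_def w_def)
  have w_null: "weakly_null S NS (filtermap z G') w"
    using \<open>weakly_null S NS G z\<close> _ w_z by (rule weakly_null_filtermap_cong) (simp add: G'_def)
  have upper: "Limsup (filtermap z G') (\<lambda>v. ereal (g (w v))) \<le> ereal b"
    by (rule limsup_le[OF _ w_null]) (use \<open>0 \<in> S\<close> \<open>\<nu> 0 \<le> s\<close> in \<open>auto simp: w_def\<close>)
  have "eventually (\<lambda>l. ereal c \<le> ereal (g (w (z l)))) G'"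
    using in_E w_z by eventually_elim (simp add: E_def)
  then have "ereal c \<le> Liminf G' (\<lambda>l. ereal (g (w (z l))))"
    by (rule Liminf_bounded)
  also have "\<dots> \<le> Limsup G' (\<lambda>l. ereal (g (w (z l))))"
    using \<open>G' \<noteq> bot\<close> by (intro Liminf_le_Limsup) simp
  also have "\<dots> \<le> Limsup (filtermap z G') (\<lambda>v. ereal (g (w v)))"
    by (rule Limsup_filtermap_ge)
  finally have "ereal c \<le> ereal b"
    using upper by (rule order_trans)
  then show ?thesis
    by simp
qed

text \<open>A Limsup bound for all weakly null nets of size at most s upgrades to an eventual bound
  in terms of the actual size: otherwise some band of sizes of width h carries the
  violations frequently, and the part of the net in that band contradicts the bound for the
  s at the top of the band.\<close>

lemma weakly_null_eventually_le:
  fixes z :: "'l \<Rightarrow> 'x::real_vector" and g \<nu> :: "'x \<Rightarrow> real" and \<Phi> :: "real \<Rightarrow> real"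
  assumes limsup_le: "\<And>s (H :: 'x filter) w. 0 < s \<Longrightarrow> \<forall>v. w v \<in> S \<and> \<nu> (w v) \<le> s \<Longrightarrow>
      weakly_null S NS H w \<Longrightarrow> Limsup H (\<lambda>v. ereal (g (w v))) \<le> ereal (\<Phi> s)"
    and slope: "\<And>s t. 0 \<le> s \<Longrightarrow> s \<le> t \<Longrightarrow> \<Phi> t \<le> \<Phi> s + L * (t - s)" and "0 < L"
    and "0 \<in> S" "\<nu> 0 = 0" and \<nu>_nonneg: "\<And>v. 0 \<le> \<nu> v"
    and z: "\<And>l. z l \<in> S" "\<And>l. \<nu> (z l) \<le> M" and "weakly_null S NS G z" and "0 < e"
  shows "eventually (\<lambda>l. g (z l) \<le> \<Phi> (\<nu> (z l)) + e) G"
proof (rule ccontr)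
  define h where "h = e / (2 * L)"
  have "0 < h"
    using \<open>0 < e\<close> \<open>0 < L\<close> by (simp add: h_def)
  assume "\<not> ?thesis"
  then have "frequently (\<lambda>l. \<Phi> (\<nu> (z l)) + e < g (z l)) G"
    by (simp add: not_eventually not_le)
  then obtain k :: nat where band:
    "frequently (\<lambda>l. \<Phi> (\<nu> (z l)) + e < g (z l) \<and> real k * h \<le> \<nu> (z l) \<and> \<nu> (z l) \<le> (real k + 1) * h) G"
    using frequently_in_band[of _ G h "\<lambda>l. \<nu> (z l)" M] \<open>0 < h\<close> \<nu>_nonneg z(2) by blast
  define s where "s = (real k + 1) * h"
  have "0 < s"
    using \<open>0 < h\<close> by (simp add: s_def)
  have "\<Phi> s + e / 2 \<le> \<Phi> s"
  proof (rule weakly_null_frequently_le[where \<nu>=\<nu> and S=S and s=s and G=G and z=z])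
    show "Limsup H (\<lambda>v. ereal (g (w v))) \<le> ereal (\<Phi> s)"
      if "\<forall>v. w v \<in> S \<and> \<nu> (w v) \<le> s" "weakly_null S NS H w" for H :: "'x filter" and w
      using limsup_le[OF \<open>0 < s\<close> that] .
    show "frequently (\<lambda>l. z l \<in> S \<and> \<nu> (z l) \<le> s \<and> \<Phi> s + e / 2 \<le> g (z l)) G"
      using band
    proof (rule frequently_elim1)
      fix l
      assume l: "\<Phi> (\<nu> (z l)) + e < g (z l) \<and> real k * h \<le> \<nu> (z l) \<and> \<nu> (z l) \<le> (real k + 1) * h"
      \<comment> \<open>on the band, \<Phi> varies by at most L h = e/2\<close>
      have "\<Phi> s \<le> \<Phi> (\<nu> (z l)) + L * (s - \<nu> (z l))"
        using l \<nu>_nonneg by (intro slope) (auto simp: s_def)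
      also have "L * (s - \<nu> (z l)) \<le> L * h"
        using l \<open>0 < L\<close> by (intro mult_left_mono) (auto simp: s_def algebra_simps)
      finally show "z l \<in> S \<and> \<nu> (z l) \<le> s \<and> \<Phi> s + e / 2 \<le> g (z l)"
        using l z(1) \<open>0 < L\<close> by (auto simp: s_def h_def)
    qed
  qed (use assms \<open>0 < s\<close> in auto)
  with \<open>0 < e\<close> show False
    by simp
qed

section \<open>The constants t_p and t_infinity\<close>

definition tp_bound ::
  "real \<Rightarrow> 'a::real_vector set \<Rightarrow> ('a \<Rightarrow> real) \<Rightarrow> 'b::real_vector set \<Rightarrow> ('b \<Rightarrow> real) \<Rightarrow> ('a \<Rightarrow> 'b) \<Rightarrow> real \<Rightarrow> bool"
  where "tp_bound p S NS T NT B C \<longleftrightarrow>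
    (\<forall>y\<in>T. \<forall>\<sigma>>0. \<forall>(F::'a filter) (x::'a \<Rightarrow> 'a).
       (\<forall>l. x l \<in> S \<and> NS (x l) \<le> \<sigma>) \<and> weakly_null S NS F x \<longrightarrow>
       Limsup F (\<lambda>l. ereal (NT (y + B (x l)) powr p)) \<le> ereal (NT y powr p + C powr p * \<sigma> powr p))"

definition tinf_bound ::
  "'a::real_vector set \<Rightarrow> ('a \<Rightarrow> real) \<Rightarrow> 'b::real_vector set \<Rightarrow> ('b \<Rightarrow> real) \<Rightarrow> ('a \<Rightarrow> 'b) \<Rightarrow> real \<Rightarrow> bool"
  where "tinf_bound S NS T NT B C \<longleftrightarrow>
    (\<forall>y\<in>T. \<forall>\<sigma>>0. \<forall>(F::'a filter) (x::'a \<Rightarrow> 'a).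
       (\<forall>l. x l \<in> S \<and> NS (x l) \<le> \<sigma>) \<and> weakly_null S NS F x \<longrightarrow>
       Limsup F (\<lambda>l. ereal (NT (y + B (x l)))) \<le> ereal (max (NT y) (C * \<sigma>)))"

lemma tp_le_if_tp_bound:
  "0 < C \<Longrightarrow> tp_bound p S NS T NT B C \<Longrightarrow> tp p S NS T NT B \<le> ereal C"
  unfolding tp_def tp_bound_def by (rule Inf_lower) auto

lemma tinf_le_if_tinf_bound:
  "0 < C \<Longrightarrow> tinf_bound S NS T NT B C \<Longrightarrow> tinf S NS T NT B \<le> ereal C"
  unfolding tinf_def tinf_bound_def by (rule Inf_lower) auto

lemma tp_bound_if_tp_less:
  assumes "tp p S NS T NT B < ereal C" "0 < p"
  shows "tp_bound p S NS T NT B C"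
  unfolding tp_bound_def
proof (intro ballI allI impI)
  obtain C' where "0 < C'" "C' < C" and bound: "tp_bound p S NS T NT B C'"
    using assms(1) unfolding tp_def tp_bound_def Inf_less_iff by auto
  fix y \<sigma> F and x :: "'a \<Rightarrow> 'a"
  assume "y \<in> T" "0 < \<sigma>" "(\<forall>l. x l \<in> S \<and> NS (x l) \<le> \<sigma>) \<and> weakly_null S NS F x"
  then have "Limsup F (\<lambda>l. ereal (NT (y + B (x l)) powr p)) \<le> ereal (NT y powr p + C' powr p * \<sigma> powr p)"
    using bound unfolding tp_bound_def by blast
  also have "\<dots> \<le> ereal (NT y powr p + C powr p * \<sigma> powr p)"
    using \<open>0 < C'\<close> \<open>C' < C\<close> assms(2) by (simp add: mult_right_mono powr_mono2)
  finally show "Limsup F (\<lambda>l. ereal (NT (y + B (x l)) powr p)) \<le> ereal (NT y powr p + C powr p * \<sigma> powr p)" .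
qed

lemma tinf_bound_if_tinf_less:
  assumes "tinf S NS T NT B < ereal C"
  shows "tinf_bound S NS T NT B C"
  unfolding tinf_bound_def
proof (intro ballI allI impI)
  obtain C' where "0 < C'" "C' < C" and bound: "tinf_bound S NS T NT B C'"
    using assms unfolding tinf_def tinf_bound_def Inf_less_iff by auto
  fix y \<sigma> F and x :: "'a \<Rightarrow> 'a"
  assume "y \<in> T" "0 < \<sigma>" "(\<forall>l. x l \<in> S \<and> NS (x l) \<le> \<sigma>) \<and> weakly_null S NS F x"
  then have "Limsup F (\<lambda>l. ereal (NT (y + B (x l)))) \<le> ereal (max (NT y) (C' * \<sigma>))"
    using bound unfolding tinf_bound_def by blast
  also have "\<dots> \<le> ereal (max (NT y) (C * \<sigma>))"
    using \<open>C' < C\<close> \<open>0 < \<sigma>\<close> by (simp add: max.coboundedI2)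
  finally show "Limsup F (\<lambda>l. ereal (NT (y + B (x l)))) \<le> ereal (max (NT y) (C * \<sigma>))" .
qed

lemma tp_bound_eventually_le:
  fixes B :: "'x::real_normed_vector \<Rightarrow> 'y::real_normed_vector" and z :: "'l \<Rightarrow> 'x"
  assumes bound: "tp_bound p S norm T norm B C" and "0 < C" "0 < p" "0 \<in> S" "y \<in> T"
    and "weakly_null S norm G z" "\<And>l. z l \<in> S" "\<And>l. norm (z l) \<le> M" "0 < e"
  shows "eventually (\<lambda>l. norm (y + B (z l)) powr p \<le> norm y powr p + C powr p * norm (z l) powr p + e) G"
proof (rule weakly_null_eventually_le[where \<nu>="\<lambda>v. norm v powr p" and M="M powr p" and L="C powr p"])
  fix s :: real and H :: "'x filter" and w
  assume "0 < s" and w: "\<forall>v. w v \<in> S \<and> norm (w v) powr p \<le> s" and "weakly_null S norm H w"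
  define \<sigma> where "\<sigma> = s powr (1 / p)"
  have "norm (w v) \<le> \<sigma>" for v
    using powr_mono2[of "1/p" "norm (w v) powr p" s] w \<open>0 < p\<close> by (simp add: \<sigma>_def powr_powr)
  moreover have "\<sigma> powr p = s" "0 < \<sigma>"
    using \<open>0 < s\<close> \<open>0 < p\<close> by (simp_all add: \<sigma>_def powr_powr)
  ultimately show "Limsup H (\<lambda>v. ereal (norm (y + B (w v)) powr p)) \<le> ereal (norm y powr p + C powr p * s)"
    using bound \<open>y \<in> T\<close> w \<open>weakly_null S norm H w\<close> unfolding tp_bound_def by metis
qed (use assms in \<open>auto intro: powr_mono2 simp: algebra_simps\<close>)

lemma tinf_bound_eventually_le:
  fixes B :: "'x::real_normed_vector \<Rightarrow> 'y::real_normed_vector" and z :: "'l \<Rightarrow> 'x"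
  assumes bound: "tinf_bound S norm T norm B C" and "0 < C" "0 \<in> S" "y \<in> T"
    and "weakly_null S norm G z" "\<And>l. z l \<in> S" "\<And>l. norm (z l) \<le> M" "0 < e"
  shows "eventually (\<lambda>l. norm (y + B (z l)) \<le> max (norm y) (C * norm (z l)) + e) G"
proof (rule weakly_null_eventually_le[where \<nu>=norm and M=M and L=C])
  show "Limsup H (\<lambda>v. ereal (norm (y + B (w v)))) \<le> ereal (max (norm y) (C * s))"
    if "0 < s" "\<forall>v. w v \<in> S \<and> norm (w v) \<le> s" "weakly_null S norm H w" for s and H :: "'x filter" and w
    using bound \<open>y \<in> T\<close> that unfolding tinf_bound_def by blast
  show "max (norm y) (C * t) \<le> max (norm y) (C * s) + C * (t - s)" if "s \<le> t" for s t
    using mult_left_mono[OF that less_imp_le[OF \<open>0 < C\<close>]] by (simp add: max_def algebra_simps)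
qed (use assms in auto)

section \<open>Direct sums\<close>

lemma lp_norm_powr:
  assumes "0 < p"
  shows "lp_norm p I x powr p = (\<Sum>\<^sub>\<infinity>i\<in>I. norm (x i) powr p)"
  using assms infsum_nonneg[of I "\<lambda>i. norm (x i) powr p"] by (simp add: lp_norm_def powr_powr)

lemma norm_le_lp_norm:
  assumes "0 < p" "x \<in> lp_sum p I X" "i \<in> I"
  shows "norm (x i) \<le> lp_norm p I x"
proof -
  have "norm (x i) powr p \<le> (\<Sum>\<^sub>\<infinity>i\<in>I. norm (x i) powr p)"
    using infsum_mono2[of "\<lambda>i. norm (x i) powr p" "{i}" I] assms by (simp add: lp_sum_def)
  then have "(norm (x i) powr p) powr (1/p) \<le> lp_norm p I x"
    unfolding lp_norm_def using assms(1) by (intro powr_mono2) auto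
  then show ?thesis
    using assms(1) by (simp add: powr_powr)
qed

lemma bdd_above_c0_sum:
  assumes "x \<in> c0_sum I X"
  shows "bdd_above ((\<lambda>i. norm (x i)) ` I)"
proof -
  define F where "F = {i\<in>I. 1 \<le> norm (x i)}"
  have "finite F"
    using assms unfolding c0_sum_def F_def by auto
  then have "norm (x i) \<le> 1 + (\<Sum>j\<in>F. norm (x j))" if "i \<in> I" for i
    using that member_le_sum[of i F "\<lambda>j. norm (x j)"] sum_nonneg[of F "\<lambda>j. norm (x j)"]
    by (cases "i \<in> F") (auto simp: F_def)
  then show ?thesis
    by (intro bdd_aboveI2)
qed

lemma norm_le_sup_norm:
  assumes "x \<in> c0_sum I X" "i \<in> I"
  shows "norm (x i) \<le> sup_norm I x"
  unfolding sup_norm_def using bdd_above_c0_sum[OF assms(1)] assms(2) by (rule cSUP_upper2) simp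

lemma lp_norm_add_diag_op_powr_le:
  fixes X :: "'i \<Rightarrow> 'x::real_normed_vector set" and Y :: "'i \<Rightarrow> 'y::real_normed_vector set"
  assumes "1 < p" "0 < C"
    and X: "\<And>i. i \<in> I \<Longrightarrow> subspace (X i)"
    and A: "\<And>i. i \<in> I \<Longrightarrow> bounded_linear_on (X i) norm (Y i) norm (A i)"
    and opnorm: "\<And>i. i \<in> I \<Longrightarrow> opnorm_on (X i) norm norm (A i) \<le> C"
    and y: "y \<in> lp_sum p I Y" and x: "x \<in> lp_sum p I X" "lp_norm p I x \<le> \<sigma>"
    and J: "finite J" "J \<subseteq> I" and "0 < d" "0 \<le> \<epsilon>"
    and head: "\<And>i. i \<in> J \<Longrightarrow>
      norm (y i + A i (x i)) powr p \<le> norm (y i) powr p + C powr p * norm (x i) powr p + \<epsilon>"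
  shows "lp_norm p I (y + diag_op I A x) powr p \<le> lp_norm p I y powr p
    + (1 + d) powr (p - 1) * C powr p * \<sigma> powr p + real (card J) * \<epsilon>
    + (1 + 1/d) powr (p - 1) * (\<Sum>\<^sub>\<infinity>i\<in>I - J. norm (y i) powr p)"
proof -
  have "0 < p"
    using \<open>1 < p\<close> by simp
  define q where "q = (1 + d) powr (p - 1)"
  define K where "K = (1 + 1/d) powr (p - 1)"
  have "1 \<le> q" "0 \<le> K"
    using \<open>1 < p\<close> \<open>0 < d\<close> by (auto simp: q_def K_def intro: ge_one_powr_ge_zero)
  have tail: "norm (y i + A i (x i)) powr p \<le> q * C powr p * norm (x i) powr p + K * norm (y i) powr p"
    if "i \<in> I - J" for i
  proof -
    from that have "i \<in> I"
      by simp
    with x have "norm (A i (x i)) \<le> C * norm (x i)"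
      by (intro norm_le_if_opnorm_on_le[OF A X opnorm]) (auto simp: lp_sum_def)
    then have "norm (A i (x i)) powr p \<le> C powr p * norm (x i) powr p"
      using \<open>0 < p\<close> \<open>0 < C\<close> by (auto simp: powr_mult[symmetric] intro: powr_mono2)
    then show ?thesis
      using norm_add_powr_le_convex_split[of d p "y i" "A i (x i)"] \<open>0 < d\<close> \<open>1 < p\<close> \<open>1 \<le> q\<close>
      unfolding q_def[symmetric] K_def[symmetric]
      by (smt (verit, ccfv_SIG) mult.assoc mult_left_mono)
  qed
  have "lp_norm p I (y + diag_op I A x) powr p = (\<Sum>\<^sub>\<infinity>i\<in>I. norm (y i + diag_op I A x i) powr p)"
    using \<open>0 < p\<close> by (simp add: lp_norm_powr)
  also have "\<dots> \<le> (\<Sum>\<^sub>\<infinity>i\<in>I. norm (y i) powr p) + q * C powr p * (\<Sum>\<^sub>\<infinity>i\<in>I. norm (x i) powr p)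
      + real (card J) * \<epsilon> + K * (\<Sum>\<^sub>\<infinity>i\<in>I - J. norm (y i) powr p)"
    using J y x head tail \<open>1 \<le> q\<close> \<open>0 \<le> K\<close> \<open>0 \<le> \<epsilon>\<close> J
    by (intro infsum_le_by_finite_split) (auto simp: lp_sum_def diag_op_def)
  also have "q * C powr p * (\<Sum>\<^sub>\<infinity>i\<in>I. norm (x i) powr p) \<le> q * C powr p * \<sigma> powr p"
  proof -
    have "lp_norm p I x powr p \<le> \<sigma> powr p"
      using x(2) \<open>0 < p\<close> by (intro powr_mono2) (auto simp: lp_norm_def)
    then show ?thesis
      using \<open>0 < p\<close> \<open>1 \<le> q\<close> by (intro mult_left_mono) (auto simp: lp_norm_powr)
  qed
  finally show ?thesis
    using \<open>0 < p\<close> by (simp add: lp_norm_powr q_def K_def)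
qed

lemma lp_sum_coordinates_eventually_le:
  fixes X :: "'i \<Rightarrow> 'x::real_normed_vector set" and Y :: "'i \<Rightarrow> 'y::real_normed_vector set"
  assumes "0 < p" "0 < C"
    and X: "\<And>i. i \<in> I \<Longrightarrow> subspace (X i)"
    and tp: "\<And>i. i \<in> I \<Longrightarrow> tp_bound p (X i) norm (Y i) norm (A i) C"
    and y: "y \<in> lp_sum p I Y" and x: "\<And>l. x l \<in> lp_sum p I X" "\<And>l. lp_norm p I (x l) \<le> \<sigma>"
    and null: "weakly_null (lp_sum p I X) (lp_norm p I) F x"
    and J: "finite J" "J \<subseteq> I" and "0 < \<epsilon>"
  shows "eventually (\<lambda>l. \<forall>i\<in>J.
    norm (y i + A i (x l i)) powr p \<le> norm (y i) powr p + C powr p * norm (x l i) powr p + \<epsilon>) F"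
proof (intro eventually_ball_finite ballI J(1))
  fix i
  assume "i \<in> J"
  with J have "i \<in> I"
    by auto
  have coord: "v i \<in> X i" "norm (v i) \<le> lp_norm p I v" if "v \<in> lp_sum p I X" for v
    using that \<open>i \<in> I\<close> norm_le_lp_norm[OF \<open>0 < p\<close> that \<open>i \<in> I\<close>] by (auto simp: lp_sum_def)
  show "eventually (\<lambda>l. norm (y i + A i (x l i)) powr p
      \<le> norm (y i) powr p + C powr p * norm (x l i) powr p + \<epsilon>) F"
  proof (rule tp_bound_eventually_le[OF tp[OF \<open>i \<in> I\<close>] \<open>0 < C\<close> \<open>0 < p\<close>])
    show "weakly_null (X i) norm F (\<lambda>l. x l i)"
      using coord null by (rule weakly_null_coordinate)
    show "norm (x l i) \<le> \<sigma>" for l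
      using coord(2)[OF x(1)] x(2) order_trans by blast
    show "x l i \<in> X i" for l
      using coord(1)[OF x(1)] .
    show "0 \<in> X i"
      using X[OF \<open>i \<in> I\<close>] by (rule subspace_0)
    show "y i \<in> Y i"
      using y \<open>i \<in> I\<close> by (simp add: lp_sum_def)
  qed (rule \<open>0 < \<epsilon>\<close>)
qed

lemma lp_sum_eventually_le:
  fixes X :: "'i \<Rightarrow> 'x::real_normed_vector set" and Y :: "'i \<Rightarrow> 'y::real_normed_vector set"
  assumes "1 < p" "0 < C"
    and X: "\<And>i. i \<in> I \<Longrightarrow> subspace (X i)"
    and A: "\<And>i. i \<in> I \<Longrightarrow> bounded_linear_on (X i) norm (Y i) norm (A i)"
    and opnorm: "\<And>i. i \<in> I \<Longrightarrow> opnorm_on (X i) norm norm (A i) \<le> C"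
    and tp: "\<And>i. i \<in> I \<Longrightarrow> tp_bound p (X i) norm (Y i) norm (A i) C"
    and y: "y \<in> lp_sum p I Y" and "0 < \<sigma>" and x: "\<And>l. x l \<in> lp_sum p I X" "\<And>l. lp_norm p I (x l) \<le> \<sigma>"
    and null: "weakly_null (lp_sum p I X) (lp_norm p I) F x" and "0 < e"
  shows "eventually (\<lambda>l. lp_norm p I (y + diag_op I A (x l)) powr p
    \<le> lp_norm p I y powr p + C powr p * \<sigma> powr p + e) F"
proof -
  \<comment> \<open>d, J and \<epsilon> are chosen so that each error term of lp_norm_add_diag_op_powr_le is at most e/3\<close>
  define SP where "SP = C powr p * \<sigma> powr p"
  define ny where "ny = (\<lambda>i. norm (y i) powr p)"
  have "0 < p" "0 < SP"
    using \<open>1 < p\<close> \<open>0 < C\<close> \<open>0 < \<sigma>\<close> by (simp_all add: SP_def)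
  obtain d where "0 < d" and d: "(1 + d) powr (p - 1) < 1 + e / (3 * SP)"
    using ex_one_plus_powr_less[of "e / (3 * SP)" "p - 1"] \<open>0 < e\<close> \<open>0 < SP\<close> by auto
  define K where "K = (1 + 1/d) powr (p - 1)"
  have "0 < 1 + 1/d"
    using \<open>0 < d\<close> by (intro add_pos_pos) auto
  then have "0 < K"
    by (simp add: K_def)
  have ny: "ny summable_on I"
    using y by (simp add: ny_def lp_sum_def)
  obtain J where J: "finite J" "J \<subseteq> I" "dist (sum ny J) (infsum ny I) \<le> e / (3 * K)"
    using infsum_finite_approximation[OF ny, of "e / (3 * K)"] \<open>0 < e\<close> \<open>0 < K\<close> by auto
  have "0 \<le> infsum ny (I - J)"
    by (auto simp: ny_def intro: infsum_nonneg)
  then have tail: "K * infsum ny (I - J) \<le> e / 3"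
    using J infsum_split_finite[OF ny J(1,2)] \<open>0 < K\<close> by (simp add: dist_real_def field_simps)
  define \<epsilon> where "\<epsilon> = e / (3 * (real (card J) + 1))"
  have "0 < \<epsilon>" "real (card J) * \<epsilon> \<le> e / 3"
    using \<open>0 < e\<close> by (simp_all add: \<epsilon>_def field_simps)
  have "(1 + d) powr (p - 1) * SP \<le> (1 + e / (3 * SP)) * SP"
    using d \<open>0 < SP\<close> by (intro mult_right_mono) auto
  also have "(1 + e / (3 * SP)) * SP = SP + e / 3"
    using \<open>0 < SP\<close> by (simp add: field_simps)
  finally have q: "(1 + d) powr (p - 1) * SP \<le> SP + e / 3" .
  have "eventually (\<lambda>l. \<forall>i\<in>J. norm (y i + A i (x l i)) powr p
      \<le> norm (y i) powr p + C powr p * norm (x l i) powr p + \<epsilon>) F"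
    using \<open>0 < p\<close> \<open>0 < C\<close> X tp y x null J(1,2) \<open>0 < \<epsilon>\<close> by (rule lp_sum_coordinates_eventually_le)
  then show ?thesis
  proof eventually_elim
    case (elim l)
    then have "lp_norm p I (y + diag_op I A (x l)) powr p \<le> lp_norm p I y powr p
        + (1 + d) powr (p - 1) * C powr p * \<sigma> powr p + real (card J) * \<epsilon> + K * infsum ny (I - J)"
      unfolding K_def ny_def using \<open>0 < d\<close> \<open>0 < \<epsilon>\<close>
      by (intro lp_norm_add_diag_op_powr_le[OF \<open>1 < p\<close> \<open>0 < C\<close> X A opnorm y x J(1,2)]) auto
    with q tail \<open>real (card J) * \<epsilon> \<le> e / 3\<close> show ?case
      by (simp add: SP_def mult.assoc)
  qed
qed

lemma tp_bound_lp_sum: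
  fixes X :: "'i \<Rightarrow> 'x::real_normed_vector set" and Y :: "'i \<Rightarrow> 'y::real_normed_vector set"
  assumes "1 < p" "0 < C"
    and X: "\<And>i. i \<in> I \<Longrightarrow> subspace (X i)"
    and A: "\<And>i. i \<in> I \<Longrightarrow> bounded_linear_on (X i) norm (Y i) norm (A i)"
    and opnorm: "\<And>i. i \<in> I \<Longrightarrow> opnorm_on (X i) norm norm (A i) \<le> C"
    and tp: "\<And>i. i \<in> I \<Longrightarrow> tp_bound p (X i) norm (Y i) norm (A i) C"
  shows "tp_bound p (lp_sum p I X) (lp_norm p I) (lp_sum p I Y) (lp_norm p I) (diag_op I A) C"
  unfolding tp_bound_def
proof (intro ballI allI impI, elim conjE)
  fix y \<sigma> and F :: "('i \<Rightarrow> 'x) filter" and x :: "('i \<Rightarrow> 'x) \<Rightarrow> 'i \<Rightarrow> 'x"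
  assume y: "y \<in> lp_sum p I Y" and \<sigma>: "0 < \<sigma>"
    and x: "\<forall>l. x l \<in> lp_sum p I X \<and> lp_norm p I (x l) \<le> \<sigma>"
    and null: "weakly_null (lp_sum p I X) (lp_norm p I) F x"
  show "Limsup F (\<lambda>l. ereal (lp_norm p I (y + diag_op I A (x l)) powr p))
      \<le> ereal (lp_norm p I y powr p + C powr p * \<sigma> powr p)"
  proof (rule ereal_le_epsilon2)
    fix e :: real
    assume "0 < e"
    have "eventually (\<lambda>l. lp_norm p I (y + diag_op I A (x l)) powr p
        \<le> lp_norm p I y powr p + C powr p * \<sigma> powr p + e) F"
      by (rule lp_sum_eventually_le[OF assms y \<sigma> _ _ null \<open>0 < e\<close>]) (use x in auto)
    then have "Limsup F (\<lambda>l. ereal (lp_norm p I (y + diag_op I A (x l)) powr p))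
        \<le> ereal (lp_norm p I y powr p + C powr p * \<sigma> powr p + e)"
      by (intro Limsup_bounded) (auto elim: eventually_mono)
    then show "Limsup F (\<lambda>l. ereal (lp_norm p I (y + diag_op I A (x l)) powr p))
        \<le> ereal (lp_norm p I y powr p + C powr p * \<sigma> powr p) + ereal e"
      by simp
  qed
qed

lemma c0_sum_coordinates_eventually_le:
  fixes X :: "'i \<Rightarrow> 'x::real_normed_vector set" and Y :: "'i \<Rightarrow> 'y::real_normed_vector set"
  assumes "0 < C"
    and X: "\<And>i. i \<in> I \<Longrightarrow> subspace (X i)"
    and tinf: "\<And>i. i \<in> I \<Longrightarrow> tinf_bound (X i) norm (Y i) norm (A i) C"
    and y: "y \<in> c0_sum I Y" and x: "\<And>l. x l \<in> c0_sum I X" "\<And>l. sup_norm I (x l) \<le> \<sigma>"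
    and null: "weakly_null (c0_sum I X) (sup_norm I) F x"
    and J: "finite J" "J \<subseteq> I" and "0 < \<epsilon>"
  shows "eventually (\<lambda>l. \<forall>i\<in>J.
    norm (y i + A i (x l i)) \<le> max (norm (y i)) (C * norm (x l i)) + \<epsilon>) F"
proof (intro eventually_ball_finite ballI J(1))
  fix i
  assume "i \<in> J"
  with J have "i \<in> I"
    by auto
  have coord: "v i \<in> X i" "norm (v i) \<le> sup_norm I v" if "v \<in> c0_sum I X" for v
    using that \<open>i \<in> I\<close> norm_le_sup_norm[OF that \<open>i \<in> I\<close>] by (auto simp: c0_sum_def)
  show "eventually (\<lambda>l. norm (y i + A i (x l i)) \<le> max (norm (y i)) (C * norm (x l i)) + \<epsilon>) F"
  proof (rule tinf_bound_eventually_le[OF tinf[OF \<open>i \<in> I\<close>] \<open>0 < C\<close>])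
    show "weakly_null (X i) norm F (\<lambda>l. x l i)"
      using coord null by (rule weakly_null_coordinate)
    show "norm (x l i) \<le> \<sigma>" for l
      using coord(2)[OF x(1)] x(2) order_trans by blast
    show "x l i \<in> X i" for l
      using coord(1)[OF x(1)] .
    show "0 \<in> X i"
      using X[OF \<open>i \<in> I\<close>] by (rule subspace_0)
    show "y i \<in> Y i"
      using y \<open>i \<in> I\<close> by (simp add: c0_sum_def)
  qed (rule \<open>0 < \<epsilon>\<close>)
qed

lemma c0_sum_eventually_le:
  fixes X :: "'i \<Rightarrow> 'x::real_normed_vector set" and Y :: "'i \<Rightarrow> 'y::real_normed_vector set"
  assumes "I \<noteq> {}" "0 < C"
    and X: "\<And>i. i \<in> I \<Longrightarrow> subspace (X i)"
    and A: "\<And>i. i \<in> I \<Longrightarrow> bounded_linear_on (X i) norm (Y i) norm (A i)"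
    and opnorm: "\<And>i. i \<in> I \<Longrightarrow> opnorm_on (X i) norm norm (A i) \<le> C"
    and tinf: "\<And>i. i \<in> I \<Longrightarrow> tinf_bound (X i) norm (Y i) norm (A i) C"
    and y: "y \<in> c0_sum I Y" and x: "\<And>l. x l \<in> c0_sum I X" "\<And>l. sup_norm I (x l) \<le> \<sigma>"
    and null: "weakly_null (c0_sum I X) (sup_norm I) F x" and "0 < e"
  shows "eventually (\<lambda>l. sup_norm I (y + diag_op I A (x l)) \<le> max (sup_norm I y) (C * \<sigma>) + e) F"
proof -
  define J where "J = {i\<in>I. e / 2 \<le> norm (y i)}"
  have J: "finite J" "J \<subseteq> I"
    using y \<open>0 < e\<close> unfolding J_def c0_sum_def by (auto dest: spec[of _ "e / 2"])
  have "eventually (\<lambda>l. \<forall>i\<in>J. norm (y i + A i (x l i)) \<le> max (norm (y i)) (C * norm (x l i)) + e / 2) F"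
    using \<open>0 < C\<close> X tinf y x null J half_gt_zero[OF \<open>0 < e\<close>] by (rule c0_sum_coordinates_eventually_le)
  then show ?thesis
  proof eventually_elim
    case (elim l)
    show ?case
      unfolding sup_norm_def[of I "y + diag_op I A (x l)"]
    proof (rule cSUP_least[OF \<open>I \<noteq> {}\<close>])
      fix i
      assume "i \<in> I"
      have y_i: "norm (y i) \<le> sup_norm I y"
        using y \<open>i \<in> I\<close> by (rule norm_le_sup_norm)
      have x_i: "C * norm (x l i) \<le> C * \<sigma>"
        using order_trans[OF norm_le_sup_norm[OF x(1) \<open>i \<in> I\<close>] x(2)] \<open>0 < C\<close> by simp
      have "norm (A i (x l i)) \<le> C * norm (x l i)"
        using x(1) \<open>i \<in> I\<close> by (intro norm_le_if_opnorm_on_le[OF A X opnorm]) (auto simp: c0_sum_def)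
      then have "norm (y i + A i (x l i)) \<le> norm (y i) + C * norm (x l i)"
        by (smt (verit) norm_triangle_ineq)
      \<comment> \<open>off J the coordinate of y is below e/2, so the triangle inequality suffices\<close>
      then have "norm (y i + A i (x l i)) \<le> max (sup_norm I y) (C * \<sigma>) + e"
        using elim y_i x_i \<open>i \<in> I\<close> \<open>0 < e\<close> unfolding J_def by (cases "i \<in> J") (auto simp: J_def)
      then show "norm ((y + diag_op I A (x l)) i) \<le> max (sup_norm I y) (C * \<sigma>) + e"
        using \<open>i \<in> I\<close> by (simp add: diag_op_def)
    qed
  qed
qed

lemma tinf_bound_c0_sum:
  fixes X :: "'i \<Rightarrow> 'x::real_normed_vector set" and Y :: "'i \<Rightarrow> 'y::real_normed_vector set"
  assumes "I \<noteq> {}" "0 < C"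
    and X: "\<And>i. i \<in> I \<Longrightarrow> subspace (X i)"
    and A: "\<And>i. i \<in> I \<Longrightarrow> bounded_linear_on (X i) norm (Y i) norm (A i)"
    and opnorm: "\<And>i. i \<in> I \<Longrightarrow> opnorm_on (X i) norm norm (A i) \<le> C"
    and tinf: "\<And>i. i \<in> I \<Longrightarrow> tinf_bound (X i) norm (Y i) norm (A i) C"
  shows "tinf_bound (c0_sum I X) (sup_norm I) (c0_sum I Y) (sup_norm I) (diag_op I A) C"
  unfolding tinf_bound_def
proof (intro ballI allI impI, elim conjE)
  fix y \<sigma> and F :: "('i \<Rightarrow> 'x) filter" and x :: "('i \<Rightarrow> 'x) \<Rightarrow> 'i \<Rightarrow> 'x"
  assume y: "y \<in> c0_sum I Y" and "0 < \<sigma>"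
    and x: "\<forall>l. x l \<in> c0_sum I X \<and> sup_norm I (x l) \<le> \<sigma>"
    and null: "weakly_null (c0_sum I X) (sup_norm I) F x"
  show "Limsup F (\<lambda>l. ereal (sup_norm I (y + diag_op I A (x l)))) \<le> ereal (max (sup_norm I y) (C * \<sigma>))"
  proof (rule ereal_le_epsilon2)
    fix e :: real
    assume "0 < e"
    have "eventually (\<lambda>l. sup_norm I (y + diag_op I A (x l)) \<le> max (sup_norm I y) (C * \<sigma>) + e) F"
      by (rule c0_sum_eventually_le[OF assms y _ _ null \<open>0 < e\<close>]) (use x in auto)
    then have "Limsup F (\<lambda>l. ereal (sup_norm I (y + diag_op I A (x l)))) \<le> ereal (max (sup_norm I y) (C * \<sigma>) + e)"
      by (intro Limsup_bounded) (auto elim: eventually_mono)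
    then show "Limsup F (\<lambda>l. ereal (sup_norm I (y + diag_op I A (x l)))) \<le> ereal (max (sup_norm I y) (C * \<sigma>)) + ereal e"
      by (metis plus_ereal.simps(1))
  qed
qed

lemma ereal_le_SUP_max:
  fixes t :: "'i \<Rightarrow> ereal" and n :: "'i \<Rightarrow> real"
  assumes "I \<noteq> {}" "\<And>i. i \<in> I \<Longrightarrow> 0 \<le> n i"
    and le: "\<And>C. 0 < C \<Longrightarrow> (\<And>i. i \<in> I \<Longrightarrow> t i < ereal C \<and> n i \<le> C) \<Longrightarrow> L \<le> ereal C"
  shows "L \<le> (SUP i\<in>I. max (t i) (ereal (n i)))"
proof (rule dense_ge)
  fix z
  assume above: "(SUP i\<in>I. max (t i) (ereal (n i))) < z"
  then have below: "t i < z \<and> ereal (n i) < z" if "i \<in> I" for i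
    using SUP_upper[OF that, of "\<lambda>i. max (t i) (ereal (n i))"] by (auto simp: order_le_less_trans)
  show "L \<le> z"
  proof (cases z)
    case (real C)
    obtain i where "i \<in> I"
      using \<open>I \<noteq> {}\<close> by blast
    then have "0 < C"
      using below assms(2) real by fastforce
    then show ?thesis
      using le below real by (simp add: less_imp_le)
  qed (use above in auto)
qed

theorem proposition5p1:
  fixes I :: "'i set"
    and X :: "'i \<Rightarrow> 'x::banach set" and Y :: "'i \<Rightarrow> 'y::banach set"
    and A :: "'i \<Rightarrow> 'x \<Rightarrow> 'y" and p :: real
  assumes "I \<noteq> {}"
    and "1 < p"
    and "\<And>i. i \<in> I \<Longrightarrow> subspace (X i) \<and> closed (X i)"
    and "\<And>i. i \<in> I \<Longrightarrow> subspace (Y i) \<and> closed (Y i)"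
    and "\<And>i. i \<in> I \<Longrightarrow> bounded_linear_on (X i) norm (Y i) norm (A i)"
    and "bdd_above ((\<lambda>i. opnorm_on (X i) norm norm (A i)) ` I)"
  shows "tp p (lp_sum p I X) (lp_norm p I) (lp_sum p I Y) (lp_norm p I) (diag_op I A)
           \<le> (SUP i\<in>I. max (tp p (X i) norm (Y i) norm (A i)) (ereal (opnorm_on (X i) norm norm (A i))))
         \<and> tinf (c0_sum I X) (sup_norm I) (c0_sum I Y) (sup_norm I) (diag_op I A)
           \<le> (SUP i\<in>I. max (tinf (X i) norm (Y i) norm (A i)) (ereal (opnorm_on (X i) norm norm (A i))))"
proof -
  have X: "\<And>i. i \<in> I \<Longrightarrow> subspace (X i)"
    using assms(3) by blast
  have opnorm_nonneg: "\<And>i. i \<in> I \<Longrightarrow> 0 \<le> opnorm_on (X i) norm norm (A i)"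
    using opnorm_on_nonneg assms(5) X by blast
  show ?thesis
  proof (intro conjI ereal_le_SUP_max[OF assms(1) opnorm_nonneg])
    fix C :: real
    assume "0 < C" "\<And>i. i \<in> I \<Longrightarrow>
      tp p (X i) norm (Y i) norm (A i) < ereal C \<and> opnorm_on (X i) norm norm (A i) \<le> C"
    then show "tp p (lp_sum p I X) (lp_norm p I) (lp_sum p I Y) (lp_norm p I) (diag_op I A) \<le> ereal C"
      using assms(2) X assms(5)
      by (intro tp_le_if_tp_bound tp_bound_lp_sum tp_bound_if_tp_less) auto
  next
    fix C :: real
    assume "0 < C" "\<And>i. i \<in> I \<Longrightarrow>
      tinf (X i) norm (Y i) norm (A i) < ereal C \<and> opnorm_on (X i) norm norm (A i) \<le> C"
    then show "tinf (c0_sum I X) (sup_norm I) (c0_sum I Y) (sup_norm I) (diag_op I A) \<le> ereal C"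
      using assms(1) X assms(5)
      by (intro tinf_le_if_tinf_bound tinf_bound_c0_sum tinf_bound_if_tinf_less) auto
  qed
qed

end
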